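(* Let $\mathcal{C}$ be a binary linear code of length $n$ and dimension $k$, used with BPSK (codeword $\underline c$ mapped to $\underline s$ with $s_t=1-2c_t$) over the AWGN channel $\underline y=\underline s+\underline z$, $\underline z$ with i.i.d. $\mathcal{N}(0,\sigma^2)$ components, $\sigma>0$, and maximum-likelihood (minimum Euclidean distance) decoding. Assume the all-zero codeword $\underline c^{(0)}$ is transmitted and let $E=\bigcup_{\underline s\neq\underline s^{(0)}}\{\underline s^{(0)}\to\underline s\}$ be the error event. Let $\underline c^{(1)}$ be any fixed codeword with $W_H(\underline c^{(1)})=d_1\ge1$, and let $\{B_{i,j}\}$ be the triangle spectrum of $\mathcal{C}$ with respect to $\underline c^{(1)}$. Then $${\rm Pr}\{E\}\le-(2^k-3)\,Q(\sqrt{d_1}/\sigma)+\sum_{1\le i,j\le n}B_{i,j}\,p_3(i,j),$$ where $p_3(i,j)=1-\iint_{\Omega}f(\xi_1)f(\xi_2)\,d\xi_1d\xi_2$ with $f(x)=\frac{1}{\sqrt{2\pi}\sigma}e^{-x^2/(2\sigma^2)}$, $\Omega=\{(\xi_1,\xi_2):\xi_1<\sqrt{d_1},\ \xi_1\cos\theta+\xi_2\sin\theta<\sqrt{i}\}$ and $\theta\in[0,\pi]$ with $\cos\theta=(d_1+i-j)/(2\sqrt{d_1 i})$.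
   Context: $W_H$ is Hamming weight; $Q(x)=\int_x^\infty\frac{1}{\sqrt{2\pi}}e^{-t^2/2}dt$. The event $\{\underline s^{(0)}\to\underline s\}$ is $\{\underline y:\|\underline y-\underline s\|\le\|\underline y-\underline s^{(0)}\|\}$. The triangle spectrum with respect to $\underline c^{(1)}$: $B_{i,j}$ is the number of codewords $\underline c$ with $W_H(\underline c)=i$ and $W_H(\underline c-\underline c^{(1)})=j$ (so the sum over $i,j\ge1$ counts all codewords other than $\underline c^{(0)}$ and $\underline c^{(1)}$). For such a codeword $\underline c$ with bipolar image $\underline s$, $p_3(i,j)$ equals ${\rm Pr}\{(\underline s^{(0)}\to\underline s^{(1)})\cup(\underline s^{(0)}\to\underline s)\}$. *)

theory Defs
  imports "HOL-Probability.Probability"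
begin

text \<open>Binary words of length n are functions nat => bool that are False outside {0..<n}.\<close>

definition words :: "nat \<Rightarrow> (nat \<Rightarrow> bool) set" where
  "words n = {c. \<forall>t. n \<le> t \<longrightarrow> \<not> c t}"

definition zero_word :: "nat \<Rightarrow> bool" where
  "zero_word = (\<lambda>t. False)"

definition word_add :: "(nat \<Rightarrow> bool) \<Rightarrow> (nat \<Rightarrow> bool) \<Rightarrow> (nat \<Rightarrow> bool)" where
  "word_add c d = (\<lambda>t. c t \<noteq> d t)"

text \<open>Binary linear code of length n: a subspace of GF(2)^n, i.e. a subset of the words
  containing zero and closed under addition (over GF(2) closure under scalars is automatic).
  Its dimension is k iff it has 2^k elements.\<close>

definition binary_linear_code :: "nat \<Rightarrow> nat \<Rightarrow> (nat \<Rightarrow> bool) set \<Rightarrow> bool" where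
  "binary_linear_code n k C \<longleftrightarrow>
     C \<subseteq> words n \<and> zero_word \<in> C \<and> (\<forall>c\<in>C. \<forall>d\<in>C. word_add c d \<in> C) \<and> card C = 2 ^ k"

definition hamming_weight :: "nat \<Rightarrow> (nat \<Rightarrow> bool) \<Rightarrow> nat" where
  "hamming_weight n c = card {t. t < n \<and> c t}"

definition bpsk :: "(nat \<Rightarrow> bool) \<Rightarrow> nat \<Rightarrow> real" where
  "bpsk c t = (if c t then -1 else 1)"

definition sqdist :: "nat \<Rightarrow> (nat \<Rightarrow> real) \<Rightarrow> (nat \<Rightarrow> real) \<Rightarrow> real" where
  "sqdist n y s = (\<Sum>t<n. (y t - s t)\<^sup>2)"

definition noise :: "nat \<Rightarrow> real \<Rightarrow> (nat \<Rightarrow> real) measure" where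
  "noise n \<sigma> = PiM {..<n} (\<lambda>_. density lborel (normal_density 0 \<sigma>))"

definition error_event :: "nat \<Rightarrow> real \<Rightarrow> (nat \<Rightarrow> bool) set \<Rightarrow> (nat \<Rightarrow> real) set" where
  "error_event n \<sigma> C = {z \<in> space (noise n \<sigma>).
     \<exists>c\<in>C. c \<noteq> zero_word \<and>
       sqdist n (\<lambda>t. bpsk zero_word t + z t) (bpsk c)
         \<le> sqdist n (\<lambda>t. bpsk zero_word t + z t) (bpsk zero_word)}"

definition Qfun :: "real \<Rightarrow> real" where
  "Qfun x = (LBINT t:{x<..}. 1 / sqrt (2 * pi) * exp (- t\<^sup>2 / 2))"

definition triangle_spectrum ::
  "nat \<Rightarrow> (nat \<Rightarrow> bool) set \<Rightarrow> (nat \<Rightarrow> bool) \<Rightarrow> nat \<Rightarrow> nat \<Rightarrow> nat" where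
  "triangle_spectrum n C c1 i j =
     card {c \<in> C. hamming_weight n c = i \<and> hamming_weight n (word_add c c1) = j}"

definition gauss_f :: "real \<Rightarrow> real \<Rightarrow> real" where
  "gauss_f \<sigma> x = 1 / (sqrt (2 * pi) * \<sigma>) * exp (- x\<^sup>2 / (2 * \<sigma>\<^sup>2))"

definition p3 :: "real \<Rightarrow> nat \<Rightarrow> nat \<Rightarrow> nat \<Rightarrow> real" where
  "p3 \<sigma> d1 i j =
     (let \<theta> = arccos ((real d1 + real i - real j) / (2 * sqrt (real d1 * real i)));
          \<Omega> = {(\<xi>1, \<xi>2). \<xi>1 < sqrt (real d1) \<and> \<xi>1 * cos \<theta> + \<xi>2 * sin \<theta> < sqrt (real i)}
      in 1 - (\<integral>\<xi>. indicator \<Omega> \<xi> * gauss_f \<sigma> (fst \<xi>) * gauss_f \<sigma> (snd \<xi>) \<partial>(lborel \<Otimes>\<^sub>M lborel)))"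

end

(* With the all-zero codeword sent, the pairwise event {s0 -> s} is {z. sum of z over supp c <= -w(c)}.
   Writing the error event as A(c1) \<union> \<Union>(A(c) - A(c1)) over c \<noteq> 0, c1 and applying the union bound
   gives Pr E \<le> Pr A(c1) + \<Sum>c (Pr (A(c1) \<union> A(c)) - Pr A(c1)), where Pr A(c1) = Q(sqrt d1 / \<sigma>).
   Splitting the supports of c1 and c into supp c1 - supp c, their intersection and supp c - supp c1,
   the noise sums over these three blocks are independent centred Gaussians; a rotation of the plane,
   which preserves the product Gaussian measure, turns Pr (A(c1) \<union> A(c)) into p3(w(c), w(c + c1)).
   Grouping the codewords by these two weights produces the triangle spectrum. *)

theory Submission
  imports Defs
begin

lemma borel_measurable_pair_iff:
  "(f :: real \<times> real \<Rightarrow> 'b::topological_space) \<in> borel_measurable (borel \<Otimes>\<^sub>M borel) \<longleftrightarrow> f \<in> borel_measurable borel"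
  by (simp add: borel_prod)

lemma borel_measurable_lborel_pair:
  "(f :: real \<times> real \<Rightarrow> 'b::topological_space) \<in> borel_measurable borel \<Longrightarrow> f \<in> borel_measurable (lborel \<Otimes>\<^sub>M lborel)"
  by (simp add: lborel_prod)

lemma nn_integral_lborel_pair_shear_fst:
  fixes G :: "real \<times> real \<Rightarrow> ennreal"
  assumes [measurable]: "G \<in> borel_measurable borel"
  shows "(\<integral>\<^sup>+v. G (fst v + a * snd v, snd v) \<partial>(lborel \<Otimes>\<^sub>M lborel)) = (\<integral>\<^sup>+v. G v \<partial>(lborel \<Otimes>\<^sub>M lborel))"
proof -
  have "(\<integral>\<^sup>+v. G (fst v + a * snd v, snd v) \<partial>(lborel \<Otimes>\<^sub>M lborel))
      = (\<integral>\<^sup>+y. \<integral>\<^sup>+x. G (x + a * y, y) \<partial>lborel \<partial>lborel)"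
    by (subst lborel_pair.nn_integral_snd[symmetric]) auto
  also have "\<dots> = (\<integral>\<^sup>+y. \<integral>\<^sup>+x. G (x, y) \<partial>lborel \<partial>lborel)"
  proof -
    have "(\<integral>\<^sup>+x. G (x + t, y) \<partial>lborel) = (\<integral>\<^sup>+x. G (x, y) \<partial>lborel)" for y t
      using nn_integral_real_affine[of "\<lambda>x. G (x, y)" 1 t] by (simp add: add.commute)
    then show ?thesis by simp
  qed
  also have "\<dots> = (\<integral>\<^sup>+v. G v \<partial>(lborel \<Otimes>\<^sub>M lborel))"
    by (subst lborel_pair.nn_integral_snd[symmetric]) (auto intro: borel_measurable_lborel_pair)
  finally show ?thesis .
qed

lemma nn_integral_lborel_pair_shear_snd:
  fixes G :: "real \<times> real \<Rightarrow> ennreal"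
  assumes [measurable]: "G \<in> borel_measurable borel"
  shows "(\<integral>\<^sup>+v. G (fst v, snd v + b * fst v) \<partial>(lborel \<Otimes>\<^sub>M lborel)) = (\<integral>\<^sup>+v. G v \<partial>(lborel \<Otimes>\<^sub>M lborel))"
proof -
  have "(\<integral>\<^sup>+v. G (fst v, snd v + b * fst v) \<partial>(lborel \<Otimes>\<^sub>M lborel))
      = (\<integral>\<^sup>+x. \<integral>\<^sup>+y. G (x, y + b * x) \<partial>lborel \<partial>lborel)"
    by (subst lborel.nn_integral_fst[symmetric]) auto
  also have "\<dots> = (\<integral>\<^sup>+x. \<integral>\<^sup>+y. G (x, y) \<partial>lborel \<partial>lborel)"
  proof -
    have "(\<integral>\<^sup>+y. G (x, y + t) \<partial>lborel) = (\<integral>\<^sup>+y. G (x, y) \<partial>lborel)" for x t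
      using nn_integral_real_affine[of "\<lambda>y. G (x, y)" 1 t] by (simp add: add.commute)
    then show ?thesis by simp
  qed
  also have "\<dots> = (\<integral>\<^sup>+v. G v \<partial>(lborel \<Otimes>\<^sub>M lborel))"
    by (subst lborel.nn_integral_fst[symmetric]) (auto intro: borel_measurable_lborel_pair)
  finally show ?thesis .
qed

lemma nn_integral_lborel_pair_rotation_neq_half_turn:
  fixes G :: "real \<times> real \<Rightarrow> ennreal"
  assumes G: "G \<in> borel_measurable borel" and pq: "p\<^sup>2 + q\<^sup>2 = 1" and p: "p \<noteq> -1"
  shows "(\<integral>\<^sup>+v. G (p * fst v + q * snd v, - q * fst v + p * snd v) \<partial>(lborel \<Otimes>\<^sub>M lborel))
       = (\<integral>\<^sup>+v. G v \<partial>(lborel \<Otimes>\<^sub>M lborel))"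
proof -
  have [measurable]: "G \<in> borel_measurable (borel \<Otimes>\<^sub>M borel)"
    using G borel_measurable_pair_iff by blast
  \<comment> \<open>The rotation is the product of three shears: horizontal by \<open>\<alpha>\<close>, vertical by \<open>-q\<close>, horizontal by \<open>\<alpha>\<close>.\<close>
  define \<alpha> where "\<alpha> = q / (1 + p)"
  define G1 where "G1 = (\<lambda>v. G (fst v + \<alpha> * snd v, snd v))"
  define G2 where "G2 = (\<lambda>v. G1 (fst v, snd v - q * fst v))"
  have [measurable]: "G1 \<in> borel_measurable borel" "G2 \<in> borel_measurable borel"
    unfolding G1_def G2_def borel_measurable_pair_iff[symmetric] by measurable
  have p1: "1 + p \<noteq> 0" using p by auto
  have h1: "\<alpha> * (1 + p) = q" unfolding \<alpha>_def using p1 by simp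
  have h2: "\<alpha> * q = 1 - p"
  proof -
    have "q\<^sup>2 = (1 - p) * (1 + p)" using pq by (simp add: algebra_simps power2_eq_square)
    then show ?thesis unfolding \<alpha>_def using p1 by (simp add: field_simps power2_eq_square)
  qed
  have "p * x + q * y = x + \<alpha> * y + \<alpha> * (y - q * (x + \<alpha> * y))" for x y
  proof -
    have "x + \<alpha> * y + \<alpha> * (y - q * (x + \<alpha> * y)) = x + 2*\<alpha>*y - (\<alpha>*q)*x - (\<alpha>*q)*\<alpha>*y"
      by (simp add: algebra_simps)
    also have "\<dots> = p * x + (\<alpha> * (1 + p)) * y" unfolding h2 by (simp add: algebra_simps)
    finally show ?thesis unfolding h1 by simp
  qed
  moreover have "- q * x + p * y = y - q * (x + \<alpha> * y)" for x y
  proof -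
    have "y - q * (x + \<alpha> * y) = y - q * x - (\<alpha> * q) * y" by (simp add: algebra_simps)
    then show ?thesis unfolding h2 by (simp add: algebra_simps)
  qed
  ultimately have "(\<lambda>v. G (p * fst v + q * snd v, - q * fst v + p * snd v))
      = (\<lambda>v. G2 (fst v + \<alpha> * snd v, snd v))"
    unfolding G2_def G1_def by (auto simp: fun_eq_iff)
  then have "(\<integral>\<^sup>+v. G (p * fst v + q * snd v, - q * fst v + p * snd v) \<partial>(lborel \<Otimes>\<^sub>M lborel))
      = (\<integral>\<^sup>+v. G2 v \<partial>(lborel \<Otimes>\<^sub>M lborel))"
    using nn_integral_lborel_pair_shear_fst[of G2 \<alpha>] by simp
  also have "\<dots> = (\<integral>\<^sup>+v. G1 v \<partial>(lborel \<Otimes>\<^sub>M lborel))"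
    using nn_integral_lborel_pair_shear_snd[of G1 "-q"] by (simp add: G2_def)
  also have "\<dots> = (\<integral>\<^sup>+v. G v \<partial>(lborel \<Otimes>\<^sub>M lborel))"
    unfolding G1_def by (rule nn_integral_lborel_pair_shear_fst) (rule G)
  finally show ?thesis .
qed

lemma nn_integral_lborel_pair_rotation:
  fixes G :: "real \<times> real \<Rightarrow> ennreal"
  assumes G: "G \<in> borel_measurable borel" and pq: "p\<^sup>2 + q\<^sup>2 = 1"
  shows "(\<integral>\<^sup>+v. G (p * fst v + q * snd v, - q * fst v + p * snd v) \<partial>(lborel \<Otimes>\<^sub>M lborel))
       = (\<integral>\<^sup>+v. G v \<partial>(lborel \<Otimes>\<^sub>M lborel))"
proof (cases "p = -1")
  case False
  then show ?thesis using nn_integral_lborel_pair_rotation_neq_half_turn[OF assms] by simp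
next
  case True
  \<comment> \<open>The half turn is the square of a quarter turn.\<close>
  then have q: "q = 0" using pq by (simp add: power2_eq_square)
  define G1 where "G1 = (\<lambda>v. G (snd v, - fst v))"
  have [measurable]: "G \<in> borel_measurable (borel \<Otimes>\<^sub>M borel)"
    using G borel_measurable_pair_iff by blast
  have G1: "G1 \<in> borel_measurable borel"
    unfolding G1_def borel_measurable_pair_iff[symmetric] by measurable
  have quarter_turn: "(\<integral>\<^sup>+v. H (snd v, - fst v) \<partial>(lborel \<Otimes>\<^sub>M lborel)) = (\<integral>\<^sup>+v. H v \<partial>(lborel \<Otimes>\<^sub>M lborel))"
    if "H \<in> borel_measurable borel" for H :: "real \<times> real \<Rightarrow> ennreal"
    using nn_integral_lborel_pair_rotation_neq_half_turn[OF that, of 0 1] by simp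
  show ?thesis
    using quarter_turn[OF G1] quarter_turn[OF G] unfolding G1_def True q by simp
qed

definition centred_normal :: "real \<Rightarrow> real measure" where
  "centred_normal \<sigma> = density lborel (\<lambda>x. ennreal (normal_density 0 \<sigma> x))"

lemma sets_centred_normal [simp, measurable_cong]: "sets (centred_normal \<sigma>) = sets borel"
  by (simp add: centred_normal_def)

lemma space_centred_normal [simp]: "space (centred_normal \<sigma>) = UNIV"
  by (simp add: centred_normal_def)

lemma prob_space_centred_normal: "0 < \<sigma> \<Longrightarrow> prob_space (centred_normal \<sigma>)"
  unfolding centred_normal_def by (rule prob_space_normal_density)

lemma noise_eq_PiM_centred_normal: "noise n \<sigma> = PiM {..<n} (\<lambda>_. centred_normal \<sigma>)"
  by (simp add: noise_def centred_normal_def)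

lemma nn_integral_centred_normal_pair:
  fixes F :: "real \<times> real \<Rightarrow> ennreal"
  assumes F: "F \<in> borel_measurable borel"
  shows "(\<integral>\<^sup>+x. \<integral>\<^sup>+y. F (x, y) \<partial>centred_normal \<sigma> \<partial>centred_normal \<sigma>)
     = (\<integral>\<^sup>+v. F v * ennreal (normal_density 0 \<sigma> (fst v) * normal_density 0 \<sigma> (snd v)) \<partial>(lborel \<Otimes>\<^sub>M lborel))"
proof -
  have [measurable]: "F \<in> borel_measurable (borel \<Otimes>\<^sub>M borel)"
    using F borel_measurable_pair_iff by blast
  have "(\<integral>\<^sup>+x. \<integral>\<^sup>+y. F (x, y) \<partial>centred_normal \<sigma> \<partial>centred_normal \<sigma>)
      = (\<integral>\<^sup>+x. ennreal (normal_density 0 \<sigma> x) * (\<integral>\<^sup>+y. ennreal (normal_density 0 \<sigma> y) * F (x, y) \<partial>lborel) \<partial>lborel)"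
    unfolding centred_normal_def by (subst nn_integral_density) (auto simp: nn_integral_density)
  also have "\<dots> = (\<integral>\<^sup>+x. \<integral>\<^sup>+y. F (x, y) * ennreal (normal_density 0 \<sigma> x * normal_density 0 \<sigma> y) \<partial>lborel \<partial>lborel)"
    by (subst nn_integral_cmult[symmetric]) (auto simp: ennreal_mult mult_ac)
  also have "\<dots> = (\<integral>\<^sup>+v. F v * ennreal (normal_density 0 \<sigma> (fst v) * normal_density 0 \<sigma> (snd v)) \<partial>(lborel \<Otimes>\<^sub>M lborel))"
    by (subst lborel.nn_integral_fst[symmetric]) (auto intro: borel_measurable_lborel_pair)
  finally show ?thesis .
qed

lemma normal_density_mult_rotation:
  assumes "p\<^sup>2 + q\<^sup>2 = 1"
  shows "normal_density 0 \<sigma> (p * x + q * y) * normal_density 0 \<sigma> (- q * x + p * y)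
       = normal_density 0 \<sigma> x * normal_density 0 \<sigma> y"
proof -
  have "(p * x + q * y)\<^sup>2 + (- q * x + p * y)\<^sup>2 = (p\<^sup>2 + q\<^sup>2) * (x\<^sup>2 + y\<^sup>2)"
    by (simp add: power2_eq_square algebra_simps)
  then have norm: "(p * x + q * y)\<^sup>2 + (- q * x + p * y)\<^sup>2 = x\<^sup>2 + y\<^sup>2" using assms by simp
  have "normal_density 0 \<sigma> a * normal_density 0 \<sigma> b
      = 1 / sqrt (2 * pi * \<sigma>\<^sup>2) * (1 / sqrt (2 * pi * \<sigma>\<^sup>2)) * exp (- (a\<^sup>2 + b\<^sup>2) / (2 * \<sigma>\<^sup>2))" for a b
    unfolding normal_density_def by (simp add: mult_exp_exp add_divide_distrib diff_divide_distrib)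
  then show ?thesis using norm by simp
qed

lemma nn_integral_centred_normal_pair_rotation:
  fixes H :: "real \<times> real \<Rightarrow> ennreal"
  assumes H: "H \<in> borel_measurable borel" and pq: "p\<^sup>2 + q\<^sup>2 = 1"
  shows "(\<integral>\<^sup>+x. \<integral>\<^sup>+y. H (p * x + q * y, - q * x + p * y) \<partial>centred_normal \<sigma> \<partial>centred_normal \<sigma>)
       = (\<integral>\<^sup>+x. \<integral>\<^sup>+y. H (x, y) \<partial>centred_normal \<sigma> \<partial>centred_normal \<sigma>)"
proof -
  have [measurable]: "H \<in> borel_measurable (borel \<Otimes>\<^sub>M borel)"
    using H borel_measurable_pair_iff by blast
  define \<rho> where "\<rho> = (\<lambda>v::real \<times> real. ennreal (normal_density 0 \<sigma> (fst v) * normal_density 0 \<sigma> (snd v)))"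
  have \<rho>_meas: "\<rho> \<in> borel_measurable borel"
    unfolding \<rho>_def borel_measurable_pair_iff[symmetric] by measurable
  have H_rot: "(\<lambda>v. H (p * fst v + q * snd v, - q * fst v + p * snd v)) \<in> borel_measurable borel"
    unfolding borel_measurable_pair_iff[symmetric] by measurable
  have "(\<integral>\<^sup>+x. \<integral>\<^sup>+y. H (p * x + q * y, - q * x + p * y) \<partial>centred_normal \<sigma> \<partial>centred_normal \<sigma>)
     = (\<integral>\<^sup>+v. H (p * fst v + q * snd v, - q * fst v + p * snd v) * \<rho> v \<partial>(lborel \<Otimes>\<^sub>M lborel))"
    using nn_integral_centred_normal_pair[OF H_rot, of \<sigma>] by (simp add: \<rho>_def)
  also have "\<dots> = (\<integral>\<^sup>+v. (\<lambda>w. H w * \<rho> w) (p * fst v + q * snd v, - q * fst v + p * snd v) \<partial>(lborel \<Otimes>\<^sub>M lborel))"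
  proof -
    have "\<rho> (p * x + q * y, - q * x + p * y) = \<rho> (x, y)" for x y
      unfolding \<rho>_def fst_conv snd_conv normal_density_mult_rotation[OF pq] ..
    then show ?thesis by (intro nn_integral_cong) auto
  qed
  also have "\<dots> = (\<integral>\<^sup>+v. H v * \<rho> v \<partial>(lborel \<Otimes>\<^sub>M lborel))"
    by (rule nn_integral_lborel_pair_rotation[OF _ pq]) (use \<rho>_meas H in measurable)
  also have "\<dots> = (\<integral>\<^sup>+x. \<integral>\<^sup>+y. H (x, y) \<partial>centred_normal \<sigma> \<partial>centred_normal \<sigma>)"
    unfolding \<rho>_def by (rule nn_integral_centred_normal_pair[symmetric, OF H])
  finally show ?thesis .
qed

lemma sqrt_weights_rotation:
  fixes a b :: real
  assumes a: "0 \<le> a" and b: "0 \<le> b" and ab: "0 < a + b"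
  defines "p \<equiv> sqrt (a / (a + b))" and "q \<equiv> sqrt (b / (a + b))"
  shows "p\<^sup>2 + q\<^sup>2 = 1" and "sqrt a * x + sqrt b * y = sqrt (a + b) * (p * x + q * y)"
proof -
  have "p\<^sup>2 = a / (a + b)" "q\<^sup>2 = b / (a + b)" unfolding p_def q_def using a b ab by simp_all
  then show "p\<^sup>2 + q\<^sup>2 = 1" using ab by (simp add: add_divide_distrib[symmetric])
  show "sqrt a * x + sqrt b * y = sqrt (a + b) * (p * x + q * y)"
    unfolding p_def q_def using a b ab by (simp add: real_sqrt_divide field_simps)
qed

lemma sum_merge_fst: "(\<Sum>s\<in>A. merge A J (x, y) s) = (\<Sum>s\<in>A. x s)"
  by (rule sum.cong) (auto simp: merge_def)

lemma sum_merge_snd: "B \<inter> A = {} \<Longrightarrow> B \<subseteq> J \<Longrightarrow> (\<Sum>s\<in>B. merge A J (x, y) s) = (\<Sum>s\<in>B. y s)"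
  by (rule sum.cong) (auto simp: merge_def)

lemma two_halfplanes_normalise:
  fixes a b e u v :: real
  assumes a: "0 \<le> a" and b: "0 \<le> b" and e: "0 \<le> e" and ab: "0 < a + b" and be: "0 < b + e"
  shows "(- (a + b) < sqrt (a + b) * (- u)
            \<and> - (b + e) < b / sqrt (a + b) * (- u) + sqrt (a * b / (a + b) + e) * (- v))
     \<longleftrightarrow> (u < sqrt (a + b)
            \<and> u * (b / sqrt ((a + b) * (b + e))) + v * sqrt ((a * b / (a + b) + e) / (b + e)) < sqrt (b + e))"
proof -
  have sq: "sqrt (a + b) * sqrt (a + b) = a + b" using ab by simp
  have "- (a + b) < sqrt (a + b) * (- u) \<longleftrightarrow> sqrt (a + b) * u < sqrt (a + b) * sqrt (a + b)"
    unfolding sq by linarith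
  also have "\<dots> \<longleftrightarrow> u < sqrt (a + b)"
    using ab by (intro mult_less_cancel_left_pos) simp
  finally have first: "- (a + b) < sqrt (a + b) * (- u) \<longleftrightarrow> u < sqrt (a + b)" .
  let ?w = "u * (b / sqrt (a + b)) + v * sqrt (a * b / (a + b) + e)"
  have "- (b + e) < b / sqrt (a + b) * (- u) + sqrt (a * b / (a + b) + e) * (- v)
      \<longleftrightarrow> ?w < sqrt (b + e) * sqrt (b + e)"
    using be by (simp add: algebra_simps)
  also have "\<dots> \<longleftrightarrow> ?w / sqrt (b + e) < sqrt (b + e)"
    using be by (simp add: pos_divide_less_eq)
  also have "?w / sqrt (b + e)
      = u * (b / sqrt ((a + b) * (b + e))) + v * sqrt ((a * b / (a + b) + e) / (b + e))"
    unfolding real_sqrt_divide real_sqrt_mult using ab be by (simp add: field_simps)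
  finally show ?thesis using first by blast
qed

context
  fixes \<sigma> :: real
  assumes \<sigma>: "0 < \<sigma>"
begin

interpretation N: prob_space "centred_normal \<sigma>"
  using prob_space_centred_normal[OF \<sigma>] .

interpretation P: product_prob_space "\<lambda>_. centred_normal \<sigma>"
  using prob_space_centred_normal[OF \<sigma>] by unfold_locales

lemma prob_space_PiM_centred_normal: "prob_space (PiM T (\<lambda>_. centred_normal \<sigma>))"
  by (rule prob_space_PiM) (rule prob_space_centred_normal[OF \<sigma>])

lemma emeasure_centred_normal_UNIV [simp]: "emeasure (centred_normal \<sigma>) UNIV = 1"
  using N.emeasure_space_1 by simp

lemma emeasure_PiM_centred_normal_space [simp]:
  "emeasure (PiM T (\<lambda>_. centred_normal \<sigma>)) (space (PiM T (\<lambda>_. centred_normal \<sigma>))) = 1"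
  by (rule prob_space.emeasure_space_1[OF prob_space_PiM_centred_normal])

lemma nn_integral_centred_normal_sqrt_add:
  fixes h :: "real \<Rightarrow> ennreal"
  assumes [measurable]: "h \<in> borel_measurable borel" and a: "0 \<le> a" and b: "0 \<le> b"
  shows "(\<integral>\<^sup>+x. \<integral>\<^sup>+y. h (sqrt a * x + sqrt b * y) \<partial>centred_normal \<sigma> \<partial>centred_normal \<sigma>)
       = (\<integral>\<^sup>+x. h (sqrt (a + b) * x) \<partial>centred_normal \<sigma>)"
proof (cases "a + b = 0")
  case True
  then have "a = 0" "b = 0" using a b by auto
  then show ?thesis by simp
next
  case False
  then have ab: "0 < a + b" using a b by auto
  define H where "H = (\<lambda>v::real \<times> real. h (sqrt (a + b) * fst v))"
  have "H \<in> borel_measurable borel"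
    unfolding H_def borel_measurable_pair_iff[symmetric] by measurable
  from nn_integral_centred_normal_pair_rotation[OF this sqrt_weights_rotation(1)[OF a b ab]]
  show ?thesis by (simp add: H_def sqrt_weights_rotation(2)[OF a b ab])
qed

lemma nn_integral_PiM_centred_normal_sum:
  fixes h :: "real \<Rightarrow> ennreal"
  assumes "finite A" and "h \<in> borel_measurable borel"
  shows "(\<integral>\<^sup>+z. h (\<Sum>t\<in>A. z t) \<partial>PiM A (\<lambda>_. centred_normal \<sigma>))
       = (\<integral>\<^sup>+x. h (sqrt (card A) * x) \<partial>centred_normal \<sigma>)"
  using assms
proof (induction A arbitrary: h rule: finite_induct)
  case empty
  then show ?case by (simp add: PiM_empty)
next
  case (insert t A)
  note [measurable] = insert.prems
  have "(\<integral>\<^sup>+z. h (\<Sum>t\<in>insert t A. z t) \<partial>PiM (insert t A) (\<lambda>_. centred_normal \<sigma>))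
     = (\<integral>\<^sup>+x. \<integral>\<^sup>+y. h (\<Sum>s\<in>insert t A. (x(t := y)) s) \<partial>centred_normal \<sigma> \<partial>PiM A (\<lambda>_. centred_normal \<sigma>))"
    by (rule P.product_nn_integral_insert[OF insert(1,2)]) measurable
  also have "\<dots> = (\<integral>\<^sup>+x. (\<lambda>s. \<integral>\<^sup>+y. h (sqrt 1 * y + s) \<partial>centred_normal \<sigma>) (\<Sum>s\<in>A. x s) \<partial>PiM A (\<lambda>_. centred_normal \<sigma>))"
  proof -
    have "(\<Sum>s\<in>insert t A. (x(t := y)) s) = y + (\<Sum>s\<in>A. x s)" for x and y :: real
    proof -
      have "(\<Sum>s\<in>A. (x(t := y)) s) = (\<Sum>s\<in>A. x s)" using insert(2) by (intro sum.cong) auto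
      then show ?thesis using insert(1,2) by simp
    qed
    then show ?thesis by simp
  qed
  also have "\<dots> = (\<integral>\<^sup>+x. (\<lambda>s. \<integral>\<^sup>+y. h (sqrt 1 * y + s) \<partial>centred_normal \<sigma>) (sqrt (card A) * x) \<partial>centred_normal \<sigma>)"
    by (rule insert.IH) measurable
  also have "\<dots> = (\<integral>\<^sup>+x. \<integral>\<^sup>+y. h (sqrt (card A) * x + sqrt 1 * y) \<partial>centred_normal \<sigma> \<partial>centred_normal \<sigma>)"
    by (simp add: add.commute)
  also have "\<dots> = (\<integral>\<^sup>+x. h (sqrt (card (insert t A)) * x) \<partial>centred_normal \<sigma>)"
    using nn_integral_centred_normal_sqrt_add[of h "card A" 1] insert by (simp add: add.commute)
  finally show ?case .
qed

lemma measurable_sum_components: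
  "A \<subseteq> T \<Longrightarrow> (\<lambda>z. \<Sum>t\<in>A. z t :: real) \<in> borel_measurable (PiM T (\<lambda>_. centred_normal \<sigma>))"
  by (rule borel_measurable_sum) (auto intro!: measurable_component_singleton)

lemma nn_integral_PiM_centred_normal_sum_subset:
  fixes g :: "real \<Rightarrow> ennreal"
  assumes T: "finite T" and AT: "A \<subseteq> T" and [measurable]: "g \<in> borel_measurable borel"
  shows "(\<integral>\<^sup>+z. g (\<Sum>t\<in>A. z t) \<partial>PiM T (\<lambda>_. centred_normal \<sigma>))
       = (\<integral>\<^sup>+x. g (sqrt (card A) * x) \<partial>centred_normal \<sigma>)"
proof -
  have TA: "T = A \<union> (T - A)" using AT by auto
  have A: "finite A" using T AT finite_subset by auto
  note [measurable] = measurable_sum_components[OF AT]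
  have "(\<integral>\<^sup>+z. g (\<Sum>t\<in>A. z t) \<partial>PiM T (\<lambda>_. centred_normal \<sigma>))
      = (\<integral>\<^sup>+x. \<integral>\<^sup>+y. g (\<Sum>t\<in>A. merge A (T - A) (x, y) t) \<partial>PiM (T - A) (\<lambda>_. centred_normal \<sigma>) \<partial>PiM A (\<lambda>_. centred_normal \<sigma>))"
    by (subst TA, rule P.product_nn_integral_fold) (use T A TA in auto)
  also have "\<dots> = (\<integral>\<^sup>+x. g (\<Sum>t\<in>A. x t) \<partial>PiM A (\<lambda>_. centred_normal \<sigma>))"
    by (simp add: sum_merge_fst)
  also have "\<dots> = (\<integral>\<^sup>+x. g (sqrt (card A) * x) \<partial>centred_normal \<sigma>)"
    by (rule nn_integral_PiM_centred_normal_sum[OF A]) measurable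
  finally show ?thesis .
qed

lemma nn_integral_PiM_centred_normal_two_sums:
  fixes g :: "real \<times> real \<Rightarrow> ennreal"
  assumes T: "finite T" and AT: "A \<subseteq> T" and BT: "B \<subseteq> T" and AB: "A \<inter> B = {}"
    and [measurable]: "g \<in> borel_measurable (borel \<Otimes>\<^sub>M borel)"
  shows "(\<integral>\<^sup>+z. g (\<Sum>t\<in>A. z t, \<Sum>t\<in>B. z t) \<partial>PiM T (\<lambda>_. centred_normal \<sigma>))
    = (\<integral>\<^sup>+x. \<integral>\<^sup>+y. g (sqrt (card A) * x, sqrt (card B) * y) \<partial>centred_normal \<sigma> \<partial>centred_normal \<sigma>)"
proof -
  have TA: "T = A \<union> (T - A)" using AT by auto
  have A: "finite A" using T AT finite_subset by auto
  have BT': "B \<subseteq> T - A" using BT AB by auto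
  note [measurable] = measurable_sum_components[OF AT] measurable_sum_components[OF BT]
  have "(\<integral>\<^sup>+z. g (\<Sum>t\<in>A. z t, \<Sum>t\<in>B. z t) \<partial>PiM T (\<lambda>_. centred_normal \<sigma>))
      = (\<integral>\<^sup>+x. \<integral>\<^sup>+y. g (\<Sum>t\<in>A. merge A (T - A) (x, y) t, \<Sum>t\<in>B. merge A (T - A) (x, y) t)
          \<partial>PiM (T - A) (\<lambda>_. centred_normal \<sigma>) \<partial>PiM A (\<lambda>_. centred_normal \<sigma>))"
    by (subst TA, rule P.product_nn_integral_fold) (use T A TA in auto)
  also have "\<dots> = (\<integral>\<^sup>+x. \<integral>\<^sup>+y. g (\<Sum>t\<in>A. x t, \<Sum>t\<in>B. y t) \<partial>PiM (T - A) (\<lambda>_. centred_normal \<sigma>) \<partial>PiM A (\<lambda>_. centred_normal \<sigma>))"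
    using AB BT' by (simp add: sum_merge_fst sum_merge_snd Int_commute)
  also have "\<dots> = (\<integral>\<^sup>+x. \<integral>\<^sup>+w. g (\<Sum>t\<in>A. x t, sqrt (card B) * w) \<partial>centred_normal \<sigma> \<partial>PiM A (\<lambda>_. centred_normal \<sigma>))"
    by (rule nn_integral_cong, rule nn_integral_PiM_centred_normal_sum_subset) (use T BT' in auto)
  also have "\<dots> = (\<integral>\<^sup>+x. (\<lambda>s. \<integral>\<^sup>+w. g (s, sqrt (card B) * w) \<partial>centred_normal \<sigma>) (sqrt (card A) * x) \<partial>centred_normal \<sigma>)"
    by (rule nn_integral_PiM_centred_normal_sum[OF A]) measurable
  finally show ?thesis by simp
qed

lemma nn_integral_PiM_centred_normal_three_sums:
  fixes g :: "real \<times> real \<times> real \<Rightarrow> ennreal"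
  assumes T: "finite T" and AT: "A \<subseteq> T" and BT: "B \<subseteq> T" and CT: "C \<subseteq> T"
    and AB: "A \<inter> B = {}" and AC: "A \<inter> C = {}" and BC: "B \<inter> C = {}"
    and [measurable]: "g \<in> borel_measurable (borel \<Otimes>\<^sub>M borel \<Otimes>\<^sub>M borel)"
  shows "(\<integral>\<^sup>+z. g (\<Sum>t\<in>A. z t, \<Sum>t\<in>B. z t, \<Sum>t\<in>C. z t) \<partial>PiM T (\<lambda>_. centred_normal \<sigma>))
    = (\<integral>\<^sup>+x. \<integral>\<^sup>+y. \<integral>\<^sup>+w. g (sqrt (card A) * x, sqrt (card B) * y, sqrt (card C) * w)
         \<partial>centred_normal \<sigma> \<partial>centred_normal \<sigma> \<partial>centred_normal \<sigma>)"
proof -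
  have TA: "T = A \<union> (T - A)" using AT by auto
  have A: "finite A" using T AT finite_subset by auto
  have BT': "B \<subseteq> T - A" and CT': "C \<subseteq> T - A" using BT AB CT AC by auto
  note [measurable] = measurable_sum_components[OF AT] measurable_sum_components[OF BT]
    measurable_sum_components[OF CT]
  have "(\<integral>\<^sup>+z. g (\<Sum>t\<in>A. z t, \<Sum>t\<in>B. z t, \<Sum>t\<in>C. z t) \<partial>PiM T (\<lambda>_. centred_normal \<sigma>))
      = (\<integral>\<^sup>+x. \<integral>\<^sup>+y. g (\<Sum>t\<in>A. merge A (T - A) (x, y) t, \<Sum>t\<in>B. merge A (T - A) (x, y) t,
            \<Sum>t\<in>C. merge A (T - A) (x, y) t) \<partial>PiM (T - A) (\<lambda>_. centred_normal \<sigma>) \<partial>PiM A (\<lambda>_. centred_normal \<sigma>))"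
    by (subst TA, rule P.product_nn_integral_fold) (use T A TA in auto)
  also have "\<dots> = (\<integral>\<^sup>+x. \<integral>\<^sup>+y. g (\<Sum>t\<in>A. x t, \<Sum>t\<in>B. y t, \<Sum>t\<in>C. y t)
      \<partial>PiM (T - A) (\<lambda>_. centred_normal \<sigma>) \<partial>PiM A (\<lambda>_. centred_normal \<sigma>))"
    using AB BT' AC CT' by (simp add: sum_merge_fst sum_merge_snd Int_commute)
  also have "\<dots> = (\<integral>\<^sup>+x. \<integral>\<^sup>+y. \<integral>\<^sup>+w. g (\<Sum>t\<in>A. x t, sqrt (card B) * y, sqrt (card C) * w)
      \<partial>centred_normal \<sigma> \<partial>centred_normal \<sigma> \<partial>PiM A (\<lambda>_. centred_normal \<sigma>))"
    using nn_integral_PiM_centred_normal_two_sums[OF finite_Diff[OF T] BT' CT' BC, of "\<lambda>v. g (\<Sum>t\<in>A. _ t, fst v, snd v)"]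
    by (intro nn_integral_cong) simp
  also have "\<dots> = (\<integral>\<^sup>+x. (\<lambda>s. \<integral>\<^sup>+y. \<integral>\<^sup>+w. g (s, sqrt (card B) * y, sqrt (card C) * w)
      \<partial>centred_normal \<sigma> \<partial>centred_normal \<sigma>) (sqrt (card A) * x) \<partial>centred_normal \<sigma>)"
    by (rule nn_integral_PiM_centred_normal_sum[OF A]) measurable
  finally show ?thesis by simp
qed

text \<open>Rotating \<open>(x, y)\<close> turns \<open>sqrt a * x + sqrt b * y\<close> into \<open>sqrt (a + b) * u\<close>; the rest of
  the second sum is a combination of two independent normals, which merge into one; a half turn
  finally flips both inequalities.\<close>

lemma nn_integral_centred_normal_two_halfplanes:
  fixes a b e :: real
  assumes a: "0 \<le> a" and b: "0 \<le> b" and e: "0 \<le> e" and ab: "0 < a + b" and be: "0 < b + e"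
  shows "(\<integral>\<^sup>+x. \<integral>\<^sup>+y. \<integral>\<^sup>+w. (if - (a + b) < sqrt a * x + sqrt b * y \<and> - (b + e) < sqrt b * y + sqrt e * w
              then 1 else 0 :: ennreal) \<partial>centred_normal \<sigma> \<partial>centred_normal \<sigma> \<partial>centred_normal \<sigma>)
    = (\<integral>\<^sup>+x. \<integral>\<^sup>+y. (if x < sqrt (a + b) \<and> x * (b / sqrt ((a + b) * (b + e)))
              + y * sqrt ((a * b / (a + b) + e) / (b + e)) < sqrt (b + e)
              then 1 else 0 :: ennreal) \<partial>centred_normal \<sigma> \<partial>centred_normal \<sigma>)"
proof -
  define p where "p = sqrt (a / (a + b))"
  define q where "q = sqrt (b / (a + b))"
  have pq: "p\<^sup>2 + q\<^sup>2 = 1" and sum_rot: "\<And>x y. sqrt a * x + sqrt b * y = sqrt (a + b) * (p * x + q * y)"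
    unfolding p_def q_def using sqrt_weights_rotation[OF a b ab] by simp_all
  have y_rot: "q * (p * x + q * y) + p * (- q * x + p * y) = y" for x y
  proof -
    have "q * (p * x + q * y) + p * (- q * x + p * y) = (p\<^sup>2 + q\<^sup>2) * y"
      by (simp add: algebra_simps power2_eq_square)
    then show ?thesis using pq by simp
  qed
  have sqrt_b_q: "sqrt b * q = b / sqrt (a + b)"
    unfolding q_def using b ab by (simp add: real_sqrt_divide)
  have p0: "0 \<le> p" unfolding p_def using a ab by simp
  have b_p2: "b * p\<^sup>2 = a * b / (a + b)"
    unfolding p_def using a ab by simp
  define K where "K = (\<lambda>v::real \<times> real. \<integral>\<^sup>+w. (if - (a + b) < sqrt (a + b) * fst v
      \<and> - (b + e) < sqrt b * (q * fst v + p * snd v) + sqrt e * w then 1 else 0 :: ennreal) \<partial>centred_normal \<sigma>)"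
  have K: "K \<in> borel_measurable borel"
    unfolding K_def borel_measurable_pair_iff[symmetric] by measurable
  define F where "F = (\<lambda>v::real \<times> real. (if - (a + b) < sqrt (a + b) * fst v
      \<and> - (b + e) < b / sqrt (a + b) * fst v + sqrt (a * b / (a + b) + e) * snd v then 1 else 0 :: ennreal))"
  have F: "F \<in> borel_measurable borel"
    unfolding F_def borel_measurable_pair_iff[symmetric] by measurable
  have "(\<integral>\<^sup>+x. \<integral>\<^sup>+y. \<integral>\<^sup>+w. (if - (a + b) < sqrt a * x + sqrt b * y \<and> - (b + e) < sqrt b * y + sqrt e * w
              then 1 else 0 :: ennreal) \<partial>centred_normal \<sigma> \<partial>centred_normal \<sigma> \<partial>centred_normal \<sigma>)
     = (\<integral>\<^sup>+x. \<integral>\<^sup>+y. K (p * x + q * y, - q * x + p * y) \<partial>centred_normal \<sigma> \<partial>centred_normal \<sigma>)"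
    unfolding K_def fst_conv snd_conv y_rot sum_rot ..
  also have "\<dots> = (\<integral>\<^sup>+u. \<integral>\<^sup>+v. K (u, v) \<partial>centred_normal \<sigma> \<partial>centred_normal \<sigma>)"
    by (rule nn_integral_centred_normal_pair_rotation[OF K pq])
  also have "\<dots> = (\<integral>\<^sup>+u. \<integral>\<^sup>+v. F (u, v) \<partial>centred_normal \<sigma> \<partial>centred_normal \<sigma>)"
  proof (rule nn_integral_cong)
    fix u :: real
    define G where "G = (\<lambda>t. (if - (a + b) < sqrt (a + b) * u \<and> - (b + e) < b / sqrt (a + b) * u + t
        then 1 else 0 :: ennreal))"
    have [measurable]: "G \<in> borel_measurable borel" unfolding G_def by measurable
    have "(\<integral>\<^sup>+v. K (u, v) \<partial>centred_normal \<sigma>)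
        = (\<integral>\<^sup>+v. \<integral>\<^sup>+w. G (sqrt (b * p\<^sup>2) * v + sqrt e * w) \<partial>centred_normal \<sigma> \<partial>centred_normal \<sigma>)"
      unfolding K_def G_def using b p0 by (simp add: real_sqrt_mult algebra_simps flip: sqrt_b_q)
    also have "\<dots> = (\<integral>\<^sup>+v. G (sqrt (b * p\<^sup>2 + e) * v) \<partial>centred_normal \<sigma>)"
      using b e by (intro nn_integral_centred_normal_sqrt_add) auto
    finally show "(\<integral>\<^sup>+v. K (u, v) \<partial>centred_normal \<sigma>) = (\<integral>\<^sup>+v. F (u, v) \<partial>centred_normal \<sigma>)"
      unfolding G_def F_def b_p2 by (simp add: mult.commute)
  qed
  also have "\<dots> = (\<integral>\<^sup>+u. \<integral>\<^sup>+v. F (- u, - v) \<partial>centred_normal \<sigma> \<partial>centred_normal \<sigma>)"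
    using nn_integral_centred_normal_pair_rotation[OF F, of "-1" 0] by simp
  also have "\<dots> = (\<integral>\<^sup>+x. \<integral>\<^sup>+y. (if x < sqrt (a + b) \<and> x * (b / sqrt ((a + b) * (b + e)))
              + y * sqrt ((a * b / (a + b) + e) / (b + e)) < sqrt (b + e)
              then 1 else 0 :: ennreal) \<partial>centred_normal \<sigma> \<partial>centred_normal \<sigma>)"
    unfolding F_def fst_conv snd_conv two_halfplanes_normalise[OF a b e ab be] ..
  finally show ?thesis .
qed

end

lemma measure_centred_normal_atMost:
  assumes \<sigma>: "0 < \<sigma>"
  shows "measure (centred_normal \<sigma>) {.. - s} = Qfun (s / \<sigma>)"
proof -
  define \<phi> where "\<phi> = (\<lambda>t::real. 1 / sqrt (2 * pi) * exp (- t\<^sup>2 / 2))"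
  have "emeasure (centred_normal \<sigma>) {.. - s}
      = (\<integral>\<^sup>+x. ennreal (normal_density 0 \<sigma> x * indicator {.. - s} x) \<partial>lborel)"
    unfolding centred_normal_def by (auto simp: emeasure_density intro!: nn_integral_cong split: split_indicator)
  also have "\<dots> = (\<integral>\<^sup>+t. ennreal \<sigma> * ennreal (normal_density 0 \<sigma> (- \<sigma> * t) * indicator {.. - s} (- \<sigma> * t)) \<partial>lborel)"
    using nn_integral_real_affine[of "\<lambda>x. ennreal (normal_density 0 \<sigma> x * indicator {.. - s} x)" "- \<sigma>" 0] \<sigma>
    by (simp add: nn_integral_cmult)
  also have "\<dots> = (\<integral>\<^sup>+t. ennreal (indicator {s / \<sigma>..} t * \<phi> t) \<partial>lborel)"
  proof (rule nn_integral_cong)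
    fix t :: real
    have "\<sigma> * normal_density 0 \<sigma> (- \<sigma> * t) = \<phi> t"
      using \<sigma> by (simp add: \<phi>_def normal_density_def real_sqrt_mult power_mult_distrib)
    moreover have "- \<sigma> * t \<le> - s \<longleftrightarrow> s / \<sigma> \<le> t"
      using \<sigma> by (simp add: divide_le_eq mult.commute)
    ultimately show "ennreal \<sigma> * ennreal (normal_density 0 \<sigma> (- \<sigma> * t) * indicator {.. - s} (- \<sigma> * t))
        = ennreal (indicator {s / \<sigma>..} t * \<phi> t)"
      using \<sigma> by (simp add: ennreal_mult'[symmetric] mult.assoc[symmetric] indicator_def)
  qed
  also have "\<dots> = (\<integral>\<^sup>+t. ennreal (indicator {s / \<sigma><..} t *\<^sub>R \<phi> t) \<partial>lborel)"
    using AE_lborel_singleton[of "s / \<sigma>"]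
    by (intro nn_integral_cong_AE, eventually_elim) (auto simp: indicator_def)
  finally have "measure (centred_normal \<sigma>) {.. - s}
      = enn2real (\<integral>\<^sup>+t. ennreal (indicator {s / \<sigma><..} t *\<^sub>R \<phi> t) \<partial>lborel)"
    by (simp add: measure_def)
  also have "\<dots> = Qfun (s / \<sigma>)"
    unfolding Qfun_def set_lebesgue_integral_def \<phi>_def by (rule integral_eq_nn_integral[symmetric]) auto
  finally show ?thesis .
qed

lemma gauss_f_eq_normal_density: "0 < \<sigma> \<Longrightarrow> gauss_f \<sigma> x = normal_density 0 \<sigma> x"
  by (simp add: gauss_f_def normal_density_def real_sqrt_mult)

lemma p3_eq_nn_integral:
  fixes a b e :: nat
  assumes \<sigma>: "0 < \<sigma>" and ab: "0 < a + b" and be: "0 < b + e"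
  shows "p3 \<sigma> (a + b) (b + e) (a + e) = 1 - enn2real (\<integral>\<^sup>+x. \<integral>\<^sup>+y.
      (if x < sqrt (real a + real b) \<and> x * (real b / sqrt ((real a + real b) * (real b + real e)))
          + y * sqrt ((real a * real b / (real a + real b) + real e) / (real b + real e)) < sqrt (real b + real e)
       then 1 else 0 :: ennreal) \<partial>centred_normal \<sigma> \<partial>centred_normal \<sigma>)"
proof -
  define A where "A = real a"
  define B where "B = real b"
  define E where "E = real e"
  have A: "0 \<le> A" and B: "0 \<le> B" and E: "0 \<le> E" unfolding A_def B_def E_def by auto
  have AB: "0 < A + B" and BE: "0 < B + E" using ab be unfolding A_def B_def E_def by auto
  define cc where "cc = B / sqrt ((A + B) * (B + E))"
  define ss where "ss = sqrt ((A * B / (A + B) + E) / (B + E))"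
  have arg: "(real (a + b) + real (b + e) - real (a + e)) / (2 * sqrt (real (a + b) * real (b + e))) = cc"
    unfolding cc_def A_def B_def E_def by simp
  have pos: "0 < (A + B) * (B + E)" using AB BE by simp
  have cc0: "0 \<le> cc" unfolding cc_def using B pos by simp
  have "B * B \<le> (A + B) * (B + E)" using A B E by (simp add: algebra_simps)
  then have "B \<le> sqrt ((A + B) * (B + E))" using B real_sqrt_le_mono by fastforce
  then have cc1: "cc \<le> 1" unfolding cc_def using pos by (simp add: divide_le_eq_1)
  have cos: "cos (arccos cc) = cc" using cc0 cc1 by (simp add: cos_arccos)
  have "1 - cc\<^sup>2 = (A * B / (A + B) + E) / (B + E)"
    unfolding cc_def using pos AB BE by (simp add: power_divide field_simps) (simp add: algebra_simps power2_eq_square)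
  then have sin: "sin (arccos cc) = ss" using cc0 cc1 unfolding ss_def by (simp add: sin_arccos)
  define \<Omega> where "\<Omega> = {(\<xi>1::real, \<xi>2::real). \<xi>1 < sqrt (real (a + b)) \<and> \<xi>1 * cc + \<xi>2 * ss < sqrt (real (b + e))}"
  define F where "F = (\<lambda>v::real \<times> real. if fst v < sqrt (A + B) \<and> fst v * cc + snd v * ss < sqrt (B + E) then 1 else 0 :: ennreal)"
  have F: "F \<in> borel_measurable borel"
    unfolding F_def borel_measurable_pair_iff[symmetric] by measurable
  have indicator_F: "ennreal (indicator \<Omega> v) = F v" for v
    unfolding \<Omega>_def F_def A_def B_def E_def by (cases v) auto
  have integrand_eq: "(\<lambda>\<xi>. indicator \<Omega> \<xi> * gauss_f \<sigma> (fst \<xi>) * gauss_f \<sigma> (snd \<xi>)) =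
      (\<lambda>\<xi>. (if fst \<xi> < sqrt (A + B) \<and> fst \<xi> * cc + snd \<xi> * ss < sqrt (B + E) then 1 else 0)
        * normal_density 0 \<sigma> (fst \<xi>) * normal_density 0 \<sigma> (snd \<xi>))"
    unfolding \<Omega>_def A_def B_def E_def using \<sigma> by (auto simp: gauss_f_eq_normal_density fun_eq_iff)
  have "(\<lambda>\<xi>. indicator \<Omega> \<xi> * gauss_f \<sigma> (fst \<xi>) * gauss_f \<sigma> (snd \<xi>)) \<in> borel_measurable (lborel \<Otimes>\<^sub>M lborel)"
    unfolding integrand_eq by measurable
  then have "(\<integral>\<xi>. indicator \<Omega> \<xi> * gauss_f \<sigma> (fst \<xi>) * gauss_f \<sigma> (snd \<xi>) \<partial>(lborel \<Otimes>\<^sub>M lborel))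
      = enn2real (\<integral>\<^sup>+\<xi>. ennreal (indicator \<Omega> \<xi> * gauss_f \<sigma> (fst \<xi>) * gauss_f \<sigma> (snd \<xi>)) \<partial>(lborel \<Otimes>\<^sub>M lborel))"
    by (rule integral_eq_nn_integral) (auto simp: gauss_f_def)
  also have "(\<integral>\<^sup>+\<xi>. ennreal (indicator \<Omega> \<xi> * gauss_f \<sigma> (fst \<xi>) * gauss_f \<sigma> (snd \<xi>)) \<partial>(lborel \<Otimes>\<^sub>M lborel))
      = (\<integral>\<^sup>+\<xi>. F \<xi> * ennreal (normal_density 0 \<sigma> (fst \<xi>) * normal_density 0 \<sigma> (snd \<xi>)) \<partial>(lborel \<Otimes>\<^sub>M lborel))"
    by (rule nn_integral_cong)
      (simp add: gauss_f_eq_normal_density[OF \<sigma>] indicator_F[symmetric] ennreal_mult' mult.assoc)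
  also have "\<dots> = (\<integral>\<^sup>+x. \<integral>\<^sup>+y. F (x, y) \<partial>centred_normal \<sigma> \<partial>centred_normal \<sigma>)"
    by (rule nn_integral_centred_normal_pair[symmetric, OF F])
  finally have "(\<integral>\<xi>. indicator \<Omega> \<xi> * gauss_f \<sigma> (fst \<xi>) * gauss_f \<sigma> (snd \<xi>) \<partial>(lborel \<Otimes>\<^sub>M lborel))
      = enn2real (\<integral>\<^sup>+x. \<integral>\<^sup>+y. F (x, y) \<partial>centred_normal \<sigma> \<partial>centred_normal \<sigma>)" .
  then show ?thesis
    unfolding p3_def Let_def arg cos sin \<Omega>_def[symmetric]
    unfolding F_def A_def B_def E_def cc_def ss_def by simp
qed

lemma measure_noise_two_sum_events:
  assumes \<sigma>: "0 < \<sigma>" and sub: "A \<subseteq> {..<n}" "B \<subseteq> {..<n}" "C \<subseteq> {..<n}"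
    and disj: "A \<inter> B = {}" "A \<inter> C = {}" "B \<inter> C = {}"
    and ab: "0 < card A + card B" and bc: "0 < card B + card C"
  shows "measure (noise n \<sigma>) {z \<in> space (noise n \<sigma>).
             (\<Sum>t\<in>A. z t) + (\<Sum>t\<in>B. z t) \<le> - real (card A + card B)
           \<or> (\<Sum>t\<in>B. z t) + (\<Sum>t\<in>C. z t) \<le> - real (card B + card C)}
       = p3 \<sigma> (card A + card B) (card B + card C) (card A + card C)"
    (is "measure ?M ?E = _")
proof -
  interpret M: prob_space ?M
    unfolding noise_eq_PiM_centred_normal by (rule prob_space_PiM_centred_normal[OF \<sigma>])
  define a where "a = card A"
  define b where "b = card B"
  define e where "e = card C"
  have [measurable]: "(\<lambda>z. \<Sum>t\<in>S. z t :: real) \<in> borel_measurable ?M" if "S \<subseteq> {..<n}" for S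
    using measurable_sum_components[OF \<sigma> that] by (simp add: noise_eq_PiM_centred_normal)
  have E: "?E \<in> M.events" using sub by measurable
  define g where "g = (\<lambda>(P::real, Q::real, R::real).
      if - (real a + real b) < P + Q \<and> - (real b + real e) < Q + R then 1 else 0 :: ennreal)"
  have g: "g \<in> borel_measurable (borel \<Otimes>\<^sub>M borel \<Otimes>\<^sub>M borel)" unfolding g_def by measurable
  have "emeasure ?M (space ?M - ?E) = (\<integral>\<^sup>+z. indicator (space ?M - ?E) z \<partial>?M)"
    using E by simp
  also have "\<dots> = (\<integral>\<^sup>+z. g (\<Sum>t\<in>A. z t, \<Sum>t\<in>B. z t, \<Sum>t\<in>C. z t) \<partial>?M)"
    by (rule nn_integral_cong) (auto simp: g_def a_def b_def e_def indicator_def)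
  also have "\<dots> = (\<integral>\<^sup>+x. \<integral>\<^sup>+y. \<integral>\<^sup>+w. g (sqrt a * x, sqrt b * y, sqrt e * w)
      \<partial>centred_normal \<sigma> \<partial>centred_normal \<sigma> \<partial>centred_normal \<sigma>)"
    unfolding noise_eq_PiM_centred_normal a_def b_def e_def
    by (rule nn_integral_PiM_centred_normal_three_sums[OF \<sigma> _ sub disj g]) simp
  also have "\<dots> = (\<integral>\<^sup>+x. \<integral>\<^sup>+y. (if x < sqrt (real a + real b) \<and>
      x * (real b / sqrt ((real a + real b) * (real b + real e)))
        + y * sqrt ((real a * real b / (real a + real b) + real e) / (real b + real e)) < sqrt (real b + real e)
      then 1 else 0 :: ennreal) \<partial>centred_normal \<sigma> \<partial>centred_normal \<sigma>)"
    unfolding g_def case_prod_conv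
    by (rule nn_integral_centred_normal_two_halfplanes[OF \<sigma>]) (use ab bc a_def b_def e_def in auto)
  finally have compl: "emeasure ?M (space ?M - ?E) = \<dots>" .
  have "measure ?M ?E = 1 - measure ?M (space ?M - ?E)"
    using M.prob_compl[OF E] by simp
  also have "\<dots> = p3 \<sigma> (a + b) (b + e) (a + e)"
    unfolding measure_def compl using ab bc a_def b_def e_def by (simp add: p3_eq_nn_integral[OF \<sigma>])
  finally show ?thesis unfolding a_def b_def e_def .
qed

lemma (in prob_space) prob_Un_UN_le:
  assumes S: "finite S" and A: "A \<in> events" and B: "\<And>s. s \<in> S \<Longrightarrow> B s \<in> events"
  shows "prob (A \<union> (\<Union>s\<in>S. B s)) \<le> prob A + (\<Sum>s\<in>S. prob (A \<union> B s) - prob A)"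
proof -
  have diff: "prob (B s - A) = prob (A \<union> B s) - prob A" if "s \<in> S" for s
    using finite_measure_Union[of A "B s - A"] A B[OF that] by (simp add: Un_Diff_cancel)
  have "prob (A \<union> (\<Union>s\<in>S. B s)) = prob (A \<union> (\<Union>s\<in>S. B s - A))"
    by (rule arg_cong[where f = prob]) blast
  also have "\<dots> \<le> prob A + prob (\<Union>s\<in>S. B s - A)"
    by (rule measure_subadditive) (use A B S in \<open>auto simp: emeasure_eq_measure intro!: sets.Diff sets.finite_UN\<close>)
  also have "prob (\<Union>s\<in>S. B s - A) \<le> (\<Sum>s\<in>S. prob (B s - A))"
    using A B S by (intro finite_measure_subadditive_finite) auto
  finally show ?thesis using diff by simp
qed

definition support :: "nat \<Rightarrow> (nat \<Rightarrow> bool) \<Rightarrow> nat set" where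
  "support n c = {t. t < n \<and> c t}"

lemma finite_support [simp]: "finite (support n c)"
  by (simp add: support_def)

lemma support_subset: "support n c \<subseteq> {..<n}"
  by (auto simp: support_def)

lemma hamming_weight_eq_card_support: "hamming_weight n c = card (support n c)"
  by (simp add: hamming_weight_def support_def)

lemma hamming_weight_le: "hamming_weight n c \<le> n"
  unfolding hamming_weight_eq_card_support using card_mono[OF _ support_subset] by fastforce

lemma hamming_weight_pos:
  assumes "c \<in> words n" and "c \<noteq> zero_word"
  shows "0 < hamming_weight n c"
proof -
  obtain t where "c t" using assms(2) by (auto simp: zero_word_def)
  moreover from this have "t < n" using assms(1) by (auto simp: words_def not_le)
  ultimately show ?thesis by (auto simp: hamming_weight_eq_card_support card_gt_0_iff support_def)
qed

lemma hamming_weight_zero_word [simp]: "hamming_weight n zero_word = 0"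
  by (simp add: hamming_weight_def zero_word_def)

lemma word_add_self [simp]: "word_add c c = zero_word"
  by (simp add: word_add_def zero_word_def)

definition pairwise_error_event :: "nat \<Rightarrow> real \<Rightarrow> (nat \<Rightarrow> bool) \<Rightarrow> (nat \<Rightarrow> real) set" where
  "pairwise_error_event n \<sigma> c = {z \<in> space (noise n \<sigma>).
       sqdist n (\<lambda>t. bpsk zero_word t + z t) (bpsk c) \<le> sqdist n (\<lambda>t. bpsk zero_word t + z t) (bpsk zero_word)}"

lemma sqdist_le_iff_sum_support:
  "sqdist n (\<lambda>t. bpsk zero_word t + z t) (bpsk c) \<le> sqdist n (\<lambda>t. bpsk zero_word t + z t) (bpsk zero_word)
   \<longleftrightarrow> (\<Sum>t\<in>support n c. z t) \<le> - real (hamming_weight n c)"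
proof -
  have "sqdist n (\<lambda>t. bpsk zero_word t + z t) (bpsk c) - sqdist n (\<lambda>t. bpsk zero_word t + z t) (bpsk zero_word)
      = (\<Sum>t<n. if c t then 4 + 4 * z t else 0)"
    unfolding sqdist_def sum_subtractf[symmetric]
    by (rule sum.cong) (auto simp: bpsk_def zero_word_def power2_eq_square algebra_simps)
  also have "\<dots> = (\<Sum>t\<in>support n c. 4 + 4 * z t)"
    by (subst sum.inter_filter[symmetric]) (auto simp: support_def intro!: sum.cong)
  also have "\<dots> = 4 * real (hamming_weight n c) + 4 * (\<Sum>t\<in>support n c. z t)"
    by (simp add: sum.distrib sum_distrib_left hamming_weight_eq_card_support)
  finally show ?thesis by linarith
qed

lemma pairwise_error_event_eq:
  "pairwise_error_event n \<sigma> c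
     = {z \<in> space (noise n \<sigma>). (\<Sum>t\<in>support n c. z t) \<le> - real (hamming_weight n c)}"
  unfolding pairwise_error_event_def sqdist_le_iff_sum_support ..

lemma pairwise_error_event_in_sets: "pairwise_error_event n \<sigma> c \<in> sets (noise n \<sigma>)"
proof -
  have [measurable]: "(\<lambda>z. \<Sum>t\<in>support n c. z t :: real) \<in> borel_measurable (noise n \<sigma>)"
    unfolding noise_eq_PiM_centred_normal
    by (rule borel_measurable_sum) (auto simp: support_def intro!: measurable_component_singleton)
  show ?thesis unfolding pairwise_error_event_eq by measurable
qed

lemma error_event_eq_UN:
  "error_event n \<sigma> C = (\<Union>c\<in>C - {zero_word}. pairwise_error_event n \<sigma> c)"
  unfolding error_event_def pairwise_error_event_def by auto

lemma measure_pairwise_error_event: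
  assumes \<sigma>: "0 < \<sigma>" and c: "0 < hamming_weight n c"
  shows "measure (noise n \<sigma>) (pairwise_error_event n \<sigma> c) = Qfun (sqrt (hamming_weight n c) / \<sigma>)"
proof -
  define d where "d = real (hamming_weight n c)"
  have d: "0 < d" using c unfolding d_def by simp
  have scaled: "indicator {.. - d} (sqrt d * x) = (indicator {.. - sqrt d} x :: ennreal)" for x
  proof -
    have "sqrt d * x \<le> - d \<longleftrightarrow> sqrt d * x \<le> sqrt d * (- sqrt d)"
      using d by simp
    also have "\<dots> \<longleftrightarrow> x \<le> - sqrt d"
      using d by (intro mult_le_cancel_left_pos) simp
    finally show ?thesis by (simp add: indicator_def)
  qed
  have "emeasure (noise n \<sigma>) (pairwise_error_event n \<sigma> c)
      = (\<integral>\<^sup>+z. indicator {.. - d} (\<Sum>t\<in>support n c. z t) \<partial>noise n \<sigma>)"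
    using pairwise_error_event_in_sets[of n \<sigma> c]
    by (auto simp: pairwise_error_event_eq d_def indicator_def intro!: nn_integral_cong
        simp flip: nn_integral_indicator)
  also have "\<dots> = (\<integral>\<^sup>+x. indicator {.. - d} (sqrt d * x) \<partial>centred_normal \<sigma>)"
    unfolding noise_eq_PiM_centred_normal d_def hamming_weight_eq_card_support
    by (rule nn_integral_PiM_centred_normal_sum_subset[OF \<sigma> _ support_subset]) auto
  also have "\<dots> = emeasure (centred_normal \<sigma>) {.. - sqrt d}"
    by (simp add: scaled)
  finally show ?thesis
    using measure_centred_normal_atMost[OF \<sigma>, of "sqrt d"] by (simp add: measure_def d_def)
qed

lemma measure_pairwise_error_event_Un:
  assumes \<sigma>: "0 < \<sigma>" and c1: "0 < hamming_weight n c1" and c: "0 < hamming_weight n c"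
  shows "measure (noise n \<sigma>) (pairwise_error_event n \<sigma> c1 \<union> pairwise_error_event n \<sigma> c)
     = p3 \<sigma> (hamming_weight n c1) (hamming_weight n c) (hamming_weight n (word_add c c1))"
proof -
  define A where "A = support n c1 - support n c"
  define B where "B = support n c1 \<inter> support n c"
  define C where "C = support n c - support n c1"
  have fin: "finite A" "finite B" "finite C" unfolding A_def B_def C_def by auto
  have sub: "A \<subseteq> {..<n}" "B \<subseteq> {..<n}" "C \<subseteq> {..<n}"
    unfolding A_def B_def C_def using support_subset by blast+
  have disj: "A \<inter> B = {}" "A \<inter> C = {}" "B \<inter> C = {}" unfolding A_def B_def C_def by auto
  have c1_AB: "support n c1 = A \<union> B" and c_BC: "support n c = B \<union> C"
    and sum_c_AC: "support n (word_add c c1) = A \<union> C"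
    unfolding A_def B_def C_def support_def word_add_def by auto
  have wt_c1: "hamming_weight n c1 = card A + card B"
    and wt_c: "hamming_weight n c = card B + card C"
    and wt_sum: "hamming_weight n (word_add c c1) = card A + card C"
    unfolding hamming_weight_eq_card_support c1_AB c_BC sum_c_AC using fin disj
    by (simp_all add: card_Un_disjoint)
  have "pairwise_error_event n \<sigma> c1 \<union> pairwise_error_event n \<sigma> c
      = {z \<in> space (noise n \<sigma>). (\<Sum>t\<in>A. z t) + (\<Sum>t\<in>B. z t) \<le> - real (card A + card B)
           \<or> (\<Sum>t\<in>B. z t) + (\<Sum>t\<in>C. z t) \<le> - real (card B + card C)}"
    unfolding pairwise_error_event_eq c1_AB c_BC wt_c1 wt_c using fin disj
    by (auto simp: sum.union_disjoint)
  then show ?thesis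
    unfolding wt_c1 wt_c wt_sum
    using measure_noise_two_sum_events[OF \<sigma> sub disj] c1 c wt_c1 wt_c by simp
qed

lemma sum_by_triangle_spectrum:
  fixes \<phi> :: "nat \<Rightarrow> nat \<Rightarrow> real"
  assumes C: "finite C"
    and weights: "\<And>c. c \<in> C - {zero_word, c1} \<Longrightarrow>
                     hamming_weight n c \<in> {1..n} \<and> hamming_weight n (word_add c c1) \<in> {1..n}"
  shows "(\<Sum>c\<in>C - {zero_word, c1}. \<phi> (hamming_weight n c) (hamming_weight n (word_add c c1)))
       = (\<Sum>i\<in>{1..n}. \<Sum>j\<in>{1..n}. real (triangle_spectrum n C c1 i j) * \<phi> i j)"
proof -
  define S where "S = C - {zero_word, c1}"
  define w where "w = (\<lambda>c. (hamming_weight n c, hamming_weight n (word_add c c1)))"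
  have fiber: "{c \<in> S. w c = (i, j)}
      = {c \<in> C. hamming_weight n c = i \<and> hamming_weight n (word_add c c1) = j}"
    if "(i, j) \<in> {1..n} \<times> {1..n}" for i j
    using that by (auto simp: S_def w_def)
  have "(\<Sum>c\<in>S. \<phi> (fst (w c)) (snd (w c)))
      = (\<Sum>ij\<in>{1..n} \<times> {1..n}. \<Sum>c\<in>{c \<in> S. w c = ij}. \<phi> (fst (w c)) (snd (w c)))"
    by (rule sum.group[symmetric]) (use C weights in \<open>auto simp: S_def w_def\<close>)
  also have "\<dots> = (\<Sum>ij\<in>{1..n} \<times> {1..n}. \<Sum>c\<in>{c \<in> S. w c = ij}. \<phi> (fst ij) (snd ij))"
    by (intro sum.cong) auto
  also have "\<dots> = (\<Sum>ij\<in>{1..n} \<times> {1..n}. real (triangle_spectrum n C c1 (fst ij) (snd ij)) * \<phi> (fst ij) (snd ij))"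
    by (intro sum.cong) (auto simp: fiber triangle_spectrum_def)
  finally show ?thesis by (simp add: S_def w_def sum.cartesian_product case_prod_beta)
qed

lemma finite_binary_linear_code: "binary_linear_code n k C \<Longrightarrow> finite C"
  unfolding binary_linear_code_def using card.infinite by force

lemma card_binary_linear_code_minus_two:
  assumes "binary_linear_code n k C" and "c1 \<in> C" and "c1 \<noteq> zero_word"
  shows "real (card (C - {zero_word, c1})) = 2 ^ k - 2"
proof -
  have "card (C - {zero_word, c1}) = card C - 2"
    using assms finite_binary_linear_code[OF assms(1)] by (subst card_Diff_subset) (auto simp: binary_linear_code_def)
  moreover have "2 \<le> card C"
    using assms finite_binary_linear_code[OF assms(1)] card_mono[of C "{zero_word, c1}"]
    by (auto simp: binary_linear_code_def)
  ultimately show ?thesis using assms(1) by (simp add: binary_linear_code_def of_nat_diff)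
qed

lemma hamming_weights_binary_linear_code:
  assumes code: "binary_linear_code n k C" and c1: "c1 \<in> C" and c: "c \<in> C - {zero_word, c1}"
  shows "hamming_weight n c \<in> {1..n} \<and> hamming_weight n (word_add c c1) \<in> {1..n}"
proof -
  have words: "C \<subseteq> words n" and closed: "word_add c c1 \<in> C"
    using code c1 c by (auto simp: binary_linear_code_def)
  have "word_add c c1 \<noteq> zero_word"
    using c by (auto simp: word_add_def zero_word_def fun_eq_iff)
  then have "0 < hamming_weight n (word_add c c1)"
    using words closed by (intro hamming_weight_pos) auto
  moreover have "0 < hamming_weight n c"
    using words c by (intro hamming_weight_pos) auto
  ultimately show ?thesis using hamming_weight_le by (auto simp: Suc_le_eq)
qed

theorem theorem1:
  fixes n k d1 :: nat and \<sigma> :: real and C :: "(nat \<Rightarrow> bool) set" and c1 :: "nat \<Rightarrow> bool"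
  assumes "binary_linear_code n k C"
    and "\<sigma> > 0"
    and "c1 \<in> C"
    and "hamming_weight n c1 = d1"
    and "d1 \<ge> 1"
  shows "measure (noise n \<sigma>) (error_event n \<sigma> C)
    \<le> - (2 ^ k - 3) * Qfun (sqrt (real d1) / \<sigma>)
      + (\<Sum>i\<in>{1..n}. \<Sum>j\<in>{1..n}. real (triangle_spectrum n C c1 i j) * p3 \<sigma> d1 i j)"
proof -
  define S where "S = C - {zero_word, c1}"
  define P where "P = pairwise_error_event n \<sigma>"
  define q where "q = Qfun (sqrt (real d1) / \<sigma>)"
  interpret M: prob_space "noise n \<sigma>"
    unfolding noise_eq_PiM_centred_normal using assms(2) by (rule prob_space_PiM_centred_normal)
  have c1: "c1 \<noteq> zero_word" "0 < hamming_weight n c1" using assms(4,5) by auto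
  have weights: "\<And>c. c \<in> S \<Longrightarrow> hamming_weight n c \<in> {1..n} \<and> hamming_weight n (word_add c c1) \<in> {1..n}"
    unfolding S_def using hamming_weights_binary_linear_code[OF assms(1,3)] .
  have card_S: "real (card S) = 2 ^ k - 2"
    unfolding S_def using card_binary_linear_code_minus_two[OF assms(1,3) c1(1)] .
  have spectrum: "(\<Sum>c\<in>S. p3 \<sigma> d1 (hamming_weight n c) (hamming_weight n (word_add c c1)))
      = (\<Sum>i\<in>{1..n}. \<Sum>j\<in>{1..n}. real (triangle_spectrum n C c1 i j) * p3 \<sigma> d1 i j)"
    unfolding S_def by (rule sum_by_triangle_spectrum[OF finite_binary_linear_code[OF assms(1)] weights[unfolded S_def]])
  have E: "error_event n \<sigma> C = P c1 \<union> (\<Union>c\<in>S. P c)"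
    unfolding error_event_eq_UN S_def P_def using assms(3) c1 by auto
  have "measure (noise n \<sigma>) (error_event n \<sigma> C)
      \<le> measure (noise n \<sigma>) (P c1) + (\<Sum>c\<in>S. measure (noise n \<sigma>) (P c1 \<union> P c) - measure (noise n \<sigma>) (P c1))"
    unfolding E using finite_binary_linear_code[OF assms(1)]
    by (intro M.prob_Un_UN_le) (auto simp: S_def P_def pairwise_error_event_in_sets)
  also have "\<dots> = q + (\<Sum>c\<in>S. p3 \<sigma> d1 (hamming_weight n c) (hamming_weight n (word_add c c1)) - q)"
    using weights assms(2,4) c1
    by (simp add: P_def q_def measure_pairwise_error_event measure_pairwise_error_event_Un Suc_le_eq)
  also have "\<dots> = q - real (card S) * q + (\<Sum>c\<in>S. p3 \<sigma> d1 (hamming_weight n c) (hamming_weight n (word_add c c1)))"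
    by (simp add: sum_subtractf)
  also have "\<dots> = - (2 ^ k - 3) * q + (\<Sum>i\<in>{1..n}. \<Sum>j\<in>{1..n}. real (triangle_spectrum n C c1 i j) * p3 \<sigma> d1 i j)"
    unfolding card_S spectrum by (simp add: algebra_simps)
  finally show ?thesis unfolding q_def .
qed

end
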